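(* Let $L$ be a pomset language. The following are equivalent: (1) $L$ is series-rational, i.e. $L=[\![e]\!]$ for some series-rational expression $e$; (2) $L=L_A(q)$ for some state $q$ of some finite and fork-acyclic pomset automaton $A$.
   Context: Fix a finite alphabet $\Sigma$. Pomsets are isomorphism classes of finite labelled posets over $\Sigma$; a pomset language is a set of pomsets. $1$ is the empty pomset; sequential composition $U\cdot V$ is the disjoint union with all elements of $U$ below all elements of $V$; parallel composition $U\parallel V$ is the disjoint union of orders. $\mathsf{SP}(\Sigma)$ is the smallest set containing $1$ and the one-element pomsets $a\in\Sigma$ closed under $\cdot,\parallel$; these lift pointwise to languages, and $L^*=\bigcup_n L^n$ with $L^0=\{1\}$, $L^{n+1}=L\cdot L^n$. Series-rational expressions: $e,f::=0\mid 1\mid a\in\Sigma\mid e+f\mid e\cdot f\mid e\parallel f\mid e^*$ with $[\![0]\!]=\emptyset$, $[\![1]\!]=\{1\}$, $[\![a]\!]=\{a\}$, $[\![e+f]\!]=[\![e]\!]\cup[\![f]\!]$, $[\![e\cdot f]\!]=[\![e]\!]\cdot[\![f]\!]$, $[\![e\parallel f]\!]=[\![e]\!]\parallel[\![f]\!]$, $[\![e^*]\!]=[\![e]\!]^*$. A pomset automaton is $A=\langle Q,F,\delta,\gamma\rangle$ with $F\subseteq Q$, $\delta:Q\times\Sigma\to2^Q$, $\gamma:Q\times\mathbb{M}(Q)\to2^Q$ ($\mathbb{M}(Q)$ finite multisets over $Q$), each $q$ having finitely many $\phi$ with $\gamma(q,\phi)\ne\emptyset$; finite if $Q$ is finite.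 The run relation $\to_A$ is the smallest relation with: $q\xrightarrow{1}_A q$; $q\xrightarrow{a}_A q'$ if $q'\in\delta(q,a)$; $q\xrightarrow{U\cdot V}_A q'$ if $q\xrightarrow{U}_A q''\xrightarrow{V}_A q'$; $q\xrightarrow{U_1\parallel\cdots\parallel U_n}_A q'$ if $q'\in\gamma(q,\{\!|q_1,\dots,q_n|\!\})$ and each $q_i\xrightarrow{U_i}_A q_i'$ for some $q_i'\in F$. $L_A(q)=\{U\in\mathsf{SP}(\Sigma)\mid\exists q'\in F.\ q\xrightarrow{U}_A q'\}$. The support relation $\preceq_A$ is the smallest preorder with $q'\preceq_A q$ whenever $q'\in\delta(q,a)$, or $q'\in\gamma(q,\phi)$, or $q'\in\phi$ with $\gamma(q,\phi)\ne\emptyset$; $A$ is fork-acyclic if $r\in\phi$ and $\gamma(q,\phi)\ne\emptyset$ imply $q\not\preceq_A r$. *)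

theory Defs
  imports Main "HOL-Library.Multiset"
begin

record 'a lposet =
  car :: "nat set"
  rel :: "(nat \<times> nat) set"
  lab :: "nat \<Rightarrow> 'a"

definition wf_lp :: "'a lposet \<Rightarrow> bool" where
  "wf_lp x \<longleftrightarrow> finite (car x) \<and> rel x \<subseteq> car x \<times> car x \<and>
     refl_on (car x) (rel x) \<and> antisym (rel x) \<and> trans (rel x)"

definition lp_iso :: "'a lposet \<Rightarrow> 'a lposet \<Rightarrow> bool" where
  "lp_iso x y \<longleftrightarrow> (\<exists>f. bij_betw f (car x) (car y) \<and>
     (\<forall>u\<in>car x. \<forall>v\<in>car x. (u, v) \<in> rel x \<longleftrightarrow> (f u, f v) \<in> rel y) \<and>
     (\<forall>u\<in>car x. lab y (f u) = lab x u))"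

definition empty_lp :: "'a lposet" where
  "empty_lp = \<lparr>car = {}, rel = {}, lab = (\<lambda>_. undefined)\<rparr>"

lemma wf_empty_lp: "wf_lp empty_lp"
  by (simp add: wf_lp_def empty_lp_def refl_on_def antisym_def trans_def)

typedef 'a pomset = "{C :: 'a lposet set. \<exists>x. wf_lp x \<and> C = {y. wf_lp y \<and> lp_iso x y}}"
  using wf_empty_lp by blast

definition pom :: "'a lposet \<Rightarrow> 'a pomset" where
  "pom x = Abs_pomset {y. wf_lp y \<and> lp_iso x y}"

definition rep :: "'a pomset \<Rightarrow> 'a lposet" where
  "rep U = (SOME x. x \<in> Rep_pomset U)"

definition par_lp :: "'a lposet \<Rightarrow> 'a lposet \<Rightarrow> 'a lposet" where
  "par_lp x y = \<lparr>car = (\<lambda>n. 2*n) ` car x \<union> (\<lambda>n. 2*n+1) ` car y,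
     rel = {(2*u, 2*v) | u v. (u, v) \<in> rel x} \<union> {(2*u+1, 2*v+1) | u v. (u, v) \<in> rel y},
     lab = (\<lambda>n. if even n then lab x (n div 2) else lab y (n div 2))\<rparr>"

definition seq_lp :: "'a lposet \<Rightarrow> 'a lposet \<Rightarrow> 'a lposet" where
  "seq_lp x y = \<lparr>car = (\<lambda>n. 2*n) ` car x \<union> (\<lambda>n. 2*n+1) ` car y,
     rel = {(2*u, 2*v) | u v. (u, v) \<in> rel x} \<union> {(2*u+1, 2*v+1) | u v. (u, v) \<in> rel y}
           \<union> {(2*u, 2*v+1) | u v. u \<in> car x \<and> v \<in> car y},
     lab = (\<lambda>n. if even n then lab x (n div 2) else lab y (n div 2))\<rparr>"

definition pom_one :: "'a pomset" where
  "pom_one = pom empty_lp"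

definition pom_sym :: "'a \<Rightarrow> 'a pomset" where
  "pom_sym a = pom \<lparr>car = {0}, rel = {(0, 0)}, lab = (\<lambda>_. a)\<rparr>"

definition pom_seq :: "'a pomset \<Rightarrow> 'a pomset \<Rightarrow> 'a pomset" where
  "pom_seq U V = pom (seq_lp (rep U) (rep V))"

definition pom_par :: "'a pomset \<Rightarrow> 'a pomset \<Rightarrow> 'a pomset" where
  "pom_par U V = pom (par_lp (rep U) (rep V))"

inductive_set sp :: "'a pomset set" where
  sp_one: "pom_one \<in> sp"
| sp_sym: "pom_sym a \<in> sp"
| sp_seq: "U \<in> sp \<Longrightarrow> V \<in> sp \<Longrightarrow> pom_seq U V \<in> sp"
| sp_par: "U \<in> sp \<Longrightarrow> V \<in> sp \<Longrightarrow> pom_par U V \<in> sp"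

definition lseq :: "'a pomset set \<Rightarrow> 'a pomset set \<Rightarrow> 'a pomset set" where
  "lseq L M = {pom_seq U V | U V. U \<in> L \<and> V \<in> M}"

definition lpar :: "'a pomset set \<Rightarrow> 'a pomset set \<Rightarrow> 'a pomset set" where
  "lpar L M = {pom_par U V | U V. U \<in> L \<and> V \<in> M}"

fun lpow :: "'a pomset set \<Rightarrow> nat \<Rightarrow> 'a pomset set" where
  "lpow L 0 = {pom_one}"
| "lpow L (Suc n) = lseq L (lpow L n)"

definition lstar :: "'a pomset set \<Rightarrow> 'a pomset set" where
  "lstar L = (\<Union>n. lpow L n)"

datatype 'a srexp = Zero | One | Sym 'a | Plus "'a srexp" "'a srexp"
  | Seq "'a srexp" "'a srexp" | Par "'a srexp" "'a srexp" | Star "'a srexp"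

fun sem :: "'a srexp \<Rightarrow> 'a pomset set" where
  "sem Zero = {}"
| "sem One = {pom_one}"
| "sem (Sym a) = {pom_sym a}"
| "sem (Plus e f) = sem e \<union> sem f"
| "sem (Seq e f) = lseq (sem e) (sem f)"
| "sem (Par e f) = lpar (sem e) (sem f)"
| "sem (Star e) = lstar (sem e)"

record 'a pa =
  states :: "nat set"
  final :: "nat set"
  delta :: "nat \<Rightarrow> 'a \<Rightarrow> nat set"
  gamma :: "nat \<Rightarrow> nat multiset \<Rightarrow> nat set"

definition pa_wf :: "'a pa \<Rightarrow> bool" where
  "pa_wf A \<longleftrightarrow> final A \<subseteq> states A \<and>
     (\<forall>q a. delta A q a \<subseteq> states A) \<and>
     (\<forall>q a. q \<notin> states A \<longrightarrow> delta A q a = {}) \<and>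
     (\<forall>q \<phi>. gamma A q \<phi> \<subseteq> states A) \<and>
     (\<forall>q \<phi>. gamma A q \<phi> \<noteq> {} \<longrightarrow> q \<in> states A \<and> set_mset \<phi> \<subseteq> states A) \<and>
     (\<forall>q. finite {\<phi>. gamma A q \<phi> \<noteq> {}})"

definition pom_par_list :: "'a pomset list \<Rightarrow> 'a pomset" where
  "pom_par_list Us = foldr pom_par Us pom_one"

inductive run :: "'a pa \<Rightarrow> nat \<Rightarrow> 'a pomset \<Rightarrow> nat \<Rightarrow> bool" for A where
  run_one: "q \<in> states A \<Longrightarrow> run A q pom_one q"
| run_sym: "q' \<in> delta A q a \<Longrightarrow> run A q (pom_sym a) q'"
| run_seq: "run A q U q'' \<Longrightarrow> run A q'' V q' \<Longrightarrow> run A q (pom_seq U V) q'"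
| run_par: "q' \<in> gamma A q (mset qs) \<Longrightarrow> length Us = length qs \<Longrightarrow>
    (\<forall>i<length qs. \<exists>f\<in>final A. run A (qs ! i) (Us ! i) f) \<Longrightarrow>
    run A q (pom_par_list Us) q'"

definition lang_pa :: "'a pa \<Rightarrow> nat \<Rightarrow> 'a pomset set" where
  "lang_pa A q = {U \<in> sp. \<exists>q'\<in>final A. run A q U q'}"

text \<open>Support relation: (q', q) in supp A means q' precedes-or-equals q.\<close>

definition supp_step :: "'a pa \<Rightarrow> (nat \<times> nat) set" where
  "supp_step A = {(q', q). (\<exists>a. q' \<in> delta A q a) \<or> (\<exists>\<phi>. q' \<in> gamma A q \<phi>) \<or>
                           (\<exists>\<phi>. q' \<in># \<phi> \<and> gamma A q \<phi> \<noteq> {})}"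

definition supp :: "'a pa \<Rightarrow> (nat \<times> nat) set" where
  "supp A = (supp_step A)\<^sup>*"

definition fork_acyclic :: "'a pa \<Rightarrow> bool" where
  "fork_acyclic A \<longleftrightarrow> (\<forall>q \<phi> r. r \<in># \<phi> \<and> gamma A q \<phi> \<noteq> {} \<longrightarrow> (q, r) \<notin> supp A)"

end

theory Submission
  imports Defs "HOL-Library.Countable"
begin

text \<open>From an expression to an automaton: a Thompson-style construction with one state per
  subexpression, where sequential, parallel and starred subexpressions are all implemented by
  forks into the states of their operands; forks only ever go to strictly smaller
  subexpressions, so the automaton is fork-acyclic.

  From an automaton to an expression: by induction on the number of states supporting \<open>q\<close>.
  Fork-acyclicity makes this number strictly smaller for the children of every fork at a state
  below \<open>q\<close>, so by induction the languages of all these forks are series-rational. Treating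
  each single transition (a letter or a whole fork) as an edge labelled by a rational
  language, the language of \<open>q\<close> is the language of a finite graph, which is rational by
  Kleene's algorithm, using the sequential star.\<close>

section \<open>Pomset isomorphism and the pomset algebra\<close>

definition lp_iso_via :: "(nat \<Rightarrow> nat) \<Rightarrow> (nat \<Rightarrow> nat) \<Rightarrow> 'a lposet \<Rightarrow> 'a lposet \<Rightarrow> bool" where
  "lp_iso_via f g x y \<longleftrightarrow>
     (\<forall>u\<in>car x. f u \<in> car y \<and> g (f u) = u \<and> lab y (f u) = lab x u) \<and>
     (\<forall>v\<in>car y. g v \<in> car x \<and> f (g v) = v) \<and>
     (\<forall>u\<in>car x. \<forall>v\<in>car x. (u, v) \<in> rel x \<longleftrightarrow> (f u, f v) \<in> rel y)"

lemma lp_iso_iff_via: "lp_iso x y \<longleftrightarrow> (\<exists>f g. lp_iso_via f g x y)"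
proof
  assume "lp_iso x y"
  then obtain f where f: "bij_betw f (car x) (car y)"
    and "\<forall>u\<in>car x. \<forall>v\<in>car x. (u, v) \<in> rel x \<longleftrightarrow> (f u, f v) \<in> rel y"
    and "\<forall>u\<in>car x. lab y (f u) = lab x u"
    unfolding lp_iso_def by blast
  then have "lp_iso_via f (inv_into (car x) f) x y"
    unfolding lp_iso_via_def
    using bij_betwE bij_betw_inv_into[OF f] bij_betw_inv_into_left[OF f]
      bij_betw_inv_into_right[OF f]
    by blast
  then show "\<exists>f g. lp_iso_via f g x y" by blast
next
  assume "\<exists>f g. lp_iso_via f g x y"
  then obtain f g where "lp_iso_via f g x y" by blast
  then show "lp_iso x y"
    unfolding lp_iso_def lp_iso_via_def by (auto intro!: exI[of _ f] bij_betw_byWitness[where f'=g])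
qed

lemma lp_iso_via_sym: "lp_iso_via f g x y \<Longrightarrow> lp_iso_via g f y x"
  unfolding lp_iso_via_def by (auto 0 3)

lemma lp_iso_via_trans:
  "lp_iso_via f f' x y \<Longrightarrow> lp_iso_via g g' y z \<Longrightarrow> lp_iso_via (g \<circ> f) (f' \<circ> g') x z"
  unfolding lp_iso_via_def by auto

lemma lp_iso_refl: "lp_iso x x"
  unfolding lp_iso_iff_via lp_iso_via_def by auto

lemma lp_iso_sym: "lp_iso x y \<Longrightarrow> lp_iso y x"
  unfolding lp_iso_iff_via using lp_iso_via_sym by blast

lemma lp_iso_trans: "lp_iso x y \<Longrightarrow> lp_iso y z \<Longrightarrow> lp_iso x z"
  unfolding lp_iso_iff_via using lp_iso_via_trans by blast

lemma pom_eq: "lp_iso x y \<Longrightarrow> pom x = pom y"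
  unfolding pom_def by (metis lp_iso_sym lp_iso_trans)

lemma rep_in_Rep_pomset: "rep U \<in> Rep_pomset U"
proof -
  obtain x where "Rep_pomset U = {y. wf_lp y \<and> lp_iso x y}" "wf_lp x"
    using Rep_pomset by blast
  then have "x \<in> Rep_pomset U" using lp_iso_refl by blast
  then show ?thesis unfolding rep_def by (rule someI)
qed

lemma wf_rep: "wf_lp (rep U)"
  using rep_in_Rep_pomset Rep_pomset by blast

lemma pom_rep: "pom (rep U) = U"
proof -
  obtain x where x: "Rep_pomset U = {y. wf_lp y \<and> lp_iso x y}"
    using Rep_pomset by blast
  then have "pom (rep U) = pom x"
    using rep_in_Rep_pomset pom_eq lp_iso_sym by blast
  also have "\<dots> = U"
    unfolding pom_def x[symmetric] by (rule Rep_pomset_inverse)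
  finally show ?thesis .
qed

lemma Rep_pomset_pom: "wf_lp x \<Longrightarrow> Rep_pomset (pom x) = {y. wf_lp y \<and> lp_iso x y}"
  unfolding pom_def by (rule Abs_pomset_inverse) blast

lemma lp_iso_rep_pom: "wf_lp x \<Longrightarrow> lp_iso x (rep (pom x))"
  using rep_in_Rep_pomset[of "pom x"] Rep_pomset_pom by blast

lemma pomset_cases: obtains x where "wf_lp x" "U = pom x"
  using wf_rep pom_rep by metis

lemma car_seq_lp: "n \<in> car (seq_lp x y) \<longleftrightarrow> (if even n then n div 2 \<in> car x else n div 2 \<in> car y)"
  unfolding seq_lp_def by (auto elim!: evenE oddE; presburger)

lemma car_par_lp: "n \<in> car (par_lp x y) \<longleftrightarrow> (if even n then n div 2 \<in> car x else n div 2 \<in> car y)"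
  unfolding par_lp_def by (auto elim!: evenE oddE; presburger)

lemma rel_par_lp: "(m, n) \<in> rel (par_lp x y) \<longleftrightarrow>
    (even m \<and> even n \<and> (m div 2, n div 2) \<in> rel x) \<or> (odd m \<and> odd n \<and> (m div 2, n div 2) \<in> rel y)"
  unfolding par_lp_def by (auto elim!: evenE oddE; presburger)

lemma rel_seq_lp: "(m, n) \<in> rel (seq_lp x y) \<longleftrightarrow> (m, n) \<in> rel (par_lp x y) \<or>
    (even m \<and> odd n \<and> m div 2 \<in> car x \<and> n div 2 \<in> car y)"
  unfolding seq_lp_def par_lp_def by (auto elim!: evenE oddE; presburger)

lemma lab_seq_lp: "lab (seq_lp x y) n = (if even n then lab x (n div 2) else lab y (n div 2))"
  unfolding seq_lp_def by simp

lemma lab_par_lp: "lab (par_lp x y) n = (if even n then lab x (n div 2) else lab y (n div 2))"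
  unfolding par_lp_def by simp

lemmas lp_simps = car_seq_lp car_par_lp rel_seq_lp rel_par_lp lab_seq_lp lab_par_lp

lemma wf_par_lp:
  assumes "wf_lp x" "wf_lp y" shows "wf_lp (par_lp x y)"
proof -
  have "finite (car (par_lp x y))" using assms unfolding wf_lp_def par_lp_def by simp
  moreover have "rel (par_lp x y) \<subseteq> car (par_lp x y) \<times> car (par_lp x y)"
    using assms unfolding wf_lp_def by (auto simp: lp_simps)
  moreover have "refl_on (car (par_lp x y)) (rel (par_lp x y))"
    using assms unfolding wf_lp_def refl_on_def by (auto simp: lp_simps split: if_splits)
  moreover have "antisym (rel (par_lp x y))"
    using assms unfolding wf_lp_def antisym_def
    by (auto simp: lp_simps) (metis dvd_mult_div_cancel odd_two_times_div_two_succ)+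
  moreover have "trans (rel (par_lp x y))"
    using assms unfolding wf_lp_def trans_def by (auto simp: lp_simps; blast)
  ultimately show ?thesis unfolding wf_lp_def by blast
qed

lemma wf_seq_lp:
  assumes "wf_lp x" "wf_lp y" shows "wf_lp (seq_lp x y)"
proof -
  have "finite (car (seq_lp x y))" using assms unfolding wf_lp_def seq_lp_def by simp
  moreover have "rel (seq_lp x y) \<subseteq> car (seq_lp x y) \<times> car (seq_lp x y)"
    using assms unfolding wf_lp_def by (auto simp: lp_simps)
  moreover have "refl_on (car (seq_lp x y)) (rel (seq_lp x y))"
    using assms unfolding wf_lp_def refl_on_def by (auto simp: lp_simps split: if_splits)
  moreover have "antisym (rel (seq_lp x y))"
    using assms unfolding wf_lp_def antisym_def
    by (auto simp: lp_simps) (metis dvd_mult_div_cancel odd_two_times_div_two_succ)+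
  moreover have "trans (rel (seq_lp x y))"
    using assms unfolding wf_lp_def trans_def by (auto simp: lp_simps; blast)
  ultimately show ?thesis unfolding wf_lp_def by blast
qed

definition sum_map :: "(nat \<Rightarrow> nat) \<Rightarrow> (nat \<Rightarrow> nat) \<Rightarrow> nat \<Rightarrow> nat" where
  "sum_map f g n = (if even n then 2 * f (n div 2) else 2 * g (n div 2) + 1)"

lemma lp_iso_via_par_lp:
  "lp_iso_via f f' x x' \<Longrightarrow> lp_iso_via g g' y y' \<Longrightarrow>
    lp_iso_via (sum_map f g) (sum_map f' g') (par_lp x y) (par_lp x' y')"
  unfolding lp_iso_via_def by (auto simp: sum_map_def lp_simps)

lemma lp_iso_via_seq_lp:
  "lp_iso_via f f' x x' \<Longrightarrow> lp_iso_via g g' y y' \<Longrightarrow>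
    lp_iso_via (sum_map f g) (sum_map f' g') (seq_lp x y) (seq_lp x' y')"
  unfolding lp_iso_via_def by (auto simp: sum_map_def lp_simps)

lemma seq_lp_cong: "lp_iso x x' \<Longrightarrow> lp_iso y y' \<Longrightarrow> lp_iso (seq_lp x y) (seq_lp x' y')"
  unfolding lp_iso_iff_via using lp_iso_via_seq_lp by blast

lemma par_lp_cong: "lp_iso x x' \<Longrightarrow> lp_iso y y' \<Longrightarrow> lp_iso (par_lp x y) (par_lp x' y')"
  unfolding lp_iso_iff_via using lp_iso_via_par_lp by blast

lemma seq_lp_empty_left: "lp_iso (seq_lp empty_lp x) x"
  unfolding lp_iso_iff_via lp_iso_via_def
  by (rule exI[of _ "\<lambda>n. n div 2"], rule exI[of _ "\<lambda>n. 2 * n + 1"])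
    (auto simp: lp_simps empty_lp_def split: if_splits)

lemma seq_lp_empty_right: "lp_iso (seq_lp x empty_lp) x"
  unfolding lp_iso_iff_via lp_iso_via_def
  by (rule exI[of _ "\<lambda>n. n div 2"], rule exI[of _ "\<lambda>n. 2 * n"])
    (auto simp: lp_simps empty_lp_def split: if_splits)

lemma par_lp_empty_right: "lp_iso (par_lp x empty_lp) x"
  unfolding lp_iso_iff_via lp_iso_via_def
  by (rule exI[of _ "\<lambda>n. n div 2"], rule exI[of _ "\<lambda>n. 2 * n"])
    (auto simp: lp_simps empty_lp_def split: if_splits)

lemma par_lp_commute: "lp_iso (par_lp x y) (par_lp y x)"
  unfolding lp_iso_iff_via lp_iso_via_def
  by (intro exI[of _ "\<lambda>n. if even n then n + 1 else n - 1"])+ (auto simp: lp_simps elim!: oddE)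

text \<open>In \<open>(x y) z\<close> the elements of \<open>x\<close>, \<open>y\<close>, \<open>z\<close> are tagged \<open>4k\<close>, \<open>4k + 2\<close>, \<open>2k + 1\<close>;
  in \<open>x (y z)\<close> they are tagged \<open>2k\<close>, \<open>4k + 1\<close>, \<open>4k + 3\<close>.\<close>

definition reassoc :: "nat \<Rightarrow> nat" where
  "reassoc n = (if odd n then 2 * (2 * (n div 2) + 1) + 1
     else if even (n div 2) then 2 * (n div 2 div 2) else 2 * (2 * (n div 2 div 2)) + 1)"

definition unreassoc :: "nat \<Rightarrow> nat" where
  "unreassoc n = (if even n then 2 * (2 * (n div 2))
     else if even (n div 2) then 2 * (2 * (n div 2 div 2) + 1) else 2 * (n div 2 div 2) + 1)"

lemma car_lab_seq_lp_assoc: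
  "car (seq_lp (seq_lp x y) z) = car (par_lp (par_lp x y) z)"
  "car (seq_lp x (seq_lp y z)) = car (par_lp x (par_lp y z))"
  "lab (seq_lp (seq_lp x y) z) = lab (par_lp (par_lp x y) z)"
  "lab (seq_lp x (seq_lp y z)) = lab (par_lp x (par_lp y z))"
  by (auto simp: lp_simps fun_eq_iff)

lemma car_par_lp_leftE:
  assumes "n \<in> car (par_lp (par_lp x y) z)"
  obtains k where "n = 2 * (2 * k)" "k \<in> car x" | k where "n = 2 * (2 * k + 1)" "k \<in> car y"
    | k where "n = 2 * k + 1" "k \<in> car z"
  using assms unfolding par_lp_def by auto

lemma car_par_lp_rightE:
  assumes "n \<in> car (par_lp x (par_lp y z))"
  obtains k where "n = 2 * k" "k \<in> car x" | k where "n = 2 * (2 * k) + 1" "k \<in> car y"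
    | k where "n = 2 * (2 * k + 1) + 1" "k \<in> car z"
  using assms unfolding par_lp_def by auto

lemma reassoc_car:
  "n \<in> car (par_lp (par_lp x y) z) \<Longrightarrow> reassoc n \<in> car (par_lp x (par_lp y z)) \<and>
     unreassoc (reassoc n) = n \<and> lab (par_lp x (par_lp y z)) (reassoc n) = lab (par_lp (par_lp x y) z) n"
  by (erule car_par_lp_leftE) (auto simp: reassoc_def unreassoc_def lp_simps)

lemma unreassoc_car:
  "n \<in> car (par_lp x (par_lp y z)) \<Longrightarrow> unreassoc n \<in> car (par_lp (par_lp x y) z) \<and>
     reassoc (unreassoc n) = n"
  by (erule car_par_lp_rightE) (auto simp: reassoc_def unreassoc_def lp_simps)

lemma par_lp_assoc: "lp_iso (par_lp (par_lp x y) z) (par_lp x (par_lp y z))"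
  unfolding lp_iso_iff_via
proof (intro exI)
  show "lp_iso_via reassoc unreassoc (par_lp (par_lp x y) z) (par_lp x (par_lp y z))"
    unfolding lp_iso_via_def
  proof (intro conjI ballI)
    fix m n assume m: "m \<in> car (par_lp (par_lp x y) z)" and n: "n \<in> car (par_lp (par_lp x y) z)"
    show "(m, n) \<in> rel (par_lp (par_lp x y) z) \<longleftrightarrow> (reassoc m, reassoc n) \<in> rel (par_lp x (par_lp y z))"
      by (cases rule: car_par_lp_leftE[OF m]; cases rule: car_par_lp_leftE[OF n])
        (auto simp: reassoc_def lp_simps)
  qed (simp_all add: reassoc_car unreassoc_car)
qed

lemma seq_lp_assoc: "lp_iso (seq_lp (seq_lp x y) z) (seq_lp x (seq_lp y z))"
  unfolding lp_iso_iff_via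
proof (intro exI)
  show "lp_iso_via reassoc unreassoc (seq_lp (seq_lp x y) z) (seq_lp x (seq_lp y z))"
    unfolding lp_iso_via_def car_lab_seq_lp_assoc
  proof (intro conjI ballI)
    fix m n assume m: "m \<in> car (par_lp (par_lp x y) z)" and n: "n \<in> car (par_lp (par_lp x y) z)"
    show "(m, n) \<in> rel (seq_lp (seq_lp x y) z) \<longleftrightarrow> (reassoc m, reassoc n) \<in> rel (seq_lp x (seq_lp y z))"
      by (cases rule: car_par_lp_leftE[OF m]; cases rule: car_par_lp_leftE[OF n])
        (auto simp: reassoc_def lp_simps)
  qed (simp_all add: reassoc_car unreassoc_car)
qed

lemma pom_seq_pom: "wf_lp x \<Longrightarrow> wf_lp y \<Longrightarrow> pom_seq (pom x) (pom y) = pom (seq_lp x y)"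
  unfolding pom_seq_def by (intro pom_eq seq_lp_cong; rule lp_iso_sym, rule lp_iso_rep_pom)

lemma pom_par_pom: "wf_lp x \<Longrightarrow> wf_lp y \<Longrightarrow> pom_par (pom x) (pom y) = pom (par_lp x y)"
  unfolding pom_par_def by (intro pom_eq par_lp_cong; rule lp_iso_sym, rule lp_iso_rep_pom)

lemma pom_seq_assoc: "pom_seq (pom_seq U V) W = pom_seq U (pom_seq V W)"
proof -
  obtain u v w where "wf_lp u" "wf_lp v" "wf_lp w" "U = pom u" "V = pom v" "W = pom w"
    by (metis pomset_cases)
  then show ?thesis by (simp add: pom_seq_pom wf_seq_lp pom_eq[OF seq_lp_assoc])
qed

lemma pom_par_assoc: "pom_par (pom_par U V) W = pom_par U (pom_par V W)"
proof -
  obtain u v w where "wf_lp u" "wf_lp v" "wf_lp w" "U = pom u" "V = pom v" "W = pom w"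
    by (metis pomset_cases)
  then show ?thesis by (simp add: pom_par_pom wf_par_lp pom_eq[OF par_lp_assoc])
qed

lemma pom_par_commute: "pom_par U V = pom_par V U"
proof -
  obtain u v where "wf_lp u" "wf_lp v" "U = pom u" "V = pom v"
    by (metis pomset_cases)
  then show ?thesis by (simp add: pom_par_pom pom_eq[OF par_lp_commute])
qed

lemma pom_par_left_commute: "pom_par U (pom_par V W) = pom_par V (pom_par U W)"
  by (metis pom_par_assoc pom_par_commute)

lemma pom_seq_one_left [simp]: "pom_seq pom_one U = U"
  by (metis pomset_cases pom_one_def pom_seq_pom wf_empty_lp pom_eq[OF seq_lp_empty_left])

lemma pom_seq_one_right [simp]: "pom_seq U pom_one = U"
  by (metis pomset_cases pom_one_def pom_seq_pom wf_empty_lp pom_eq[OF seq_lp_empty_right])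

lemma pom_par_one_right [simp]: "pom_par U pom_one = U"
  by (metis pomset_cases pom_one_def pom_par_pom wf_empty_lp pom_eq[OF par_lp_empty_right])

lemma lseqI: "U \<in> L \<Longrightarrow> V \<in> M \<Longrightarrow> pom_seq U V \<in> lseq L M"
  unfolding lseq_def by blast

lemma lseqE: "W \<in> lseq L M \<Longrightarrow> (\<And>U V. W = pom_seq U V \<Longrightarrow> U \<in> L \<Longrightarrow> V \<in> M \<Longrightarrow> P) \<Longrightarrow> P"
  unfolding lseq_def by blast

lemma lpar_left_commute: "lpar L (lpar M N) = lpar M (lpar L N)"
  unfolding lpar_def using pom_par_left_commute by blast

lemma lpar_one_right [simp]: "lpar L {pom_one} = L"
  unfolding lpar_def by auto

lemma lstar_oneI: "pom_one \<in> lstar L"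
  unfolding lstar_def using lpow.simps(1) by blast

lemma lstar_stepI:
  assumes "U \<in> L" "V \<in> lstar L" shows "pom_seq U V \<in> lstar L"
proof -
  obtain n where "V \<in> lpow L n" using \<open>V \<in> lstar L\<close> unfolding lstar_def by blast
  then have "pom_seq U V \<in> lpow L (Suc n)" using \<open>U \<in> L\<close> by (auto simp: lseq_def)
  then show ?thesis unfolding lstar_def by blast
qed

lemma lstar_induct [consumes 1, case_names one step]:
  assumes "U \<in> lstar L" "P pom_one" "\<And>U V. U \<in> L \<Longrightarrow> V \<in> lstar L \<Longrightarrow> P V \<Longrightarrow> P (pom_seq U V)"
  shows "P U"
proof -
  obtain n where "U \<in> lpow L n" using assms(1) unfolding lstar_def by blast
  then show ?thesis
  proof (induction n arbitrary: U)
    case (Suc n)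
    then obtain U' V where "U = pom_seq U' V" "U' \<in> L" "V \<in> lpow L n"
      by (auto simp: lseq_def)
    then show ?case
      using Suc.IH assms(3) unfolding lstar_def by blast
  qed (simp add: assms(2))
qed

definition rational :: "'a pomset set \<Rightarrow> bool" where
  "rational L \<longleftrightarrow> (\<exists>e. L = sem e)"

lemma rational_empty [simp]: "rational {}"
  unfolding rational_def by (metis sem.simps(1))

lemma rational_one [simp]: "rational {pom_one}"
  unfolding rational_def by (metis sem.simps(2))

lemma rational_sym [simp]: "rational {pom_sym a}"
  unfolding rational_def by (metis sem.simps(3))

lemma rational_Un [intro]: "rational L \<Longrightarrow> rational M \<Longrightarrow> rational (L \<union> M)"
  unfolding rational_def by (metis sem.simps(4))

lemma rational_lseq [intro]: "rational L \<Longrightarrow> rational M \<Longrightarrow> rational (lseq L M)"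
  unfolding rational_def by (metis sem.simps(5))

lemma rational_lpar [intro]: "rational L \<Longrightarrow> rational M \<Longrightarrow> rational (lpar L M)"
  unfolding rational_def by (metis sem.simps(6))

lemma rational_lstar [intro]: "rational L \<Longrightarrow> rational (lstar L)"
  unfolding rational_def by (metis sem.simps(7))

lemma rational_UN [intro]: "finite I \<Longrightarrow> (\<And>i. i \<in> I \<Longrightarrow> rational (F i)) \<Longrightarrow> rational (\<Union>i\<in>I. F i)"
  by (induction rule: finite_induct) auto

section \<open>Runs as sequences of transitions\<close>

lemma pom_par_list_sp: "set Us \<subseteq> sp \<Longrightarrow> pom_par_list Us \<in> sp"
  by (induction Us) (simp_all add: pom_par_list_def sp.intros)

lemma run_sp: "run A q U q' \<Longrightarrow> U \<in> sp"
proof (induction rule: run.induct)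
  case (run_par q' q qs Us)
  then show ?case by (intro pom_par_list_sp) (auto simp: in_set_conv_nth)
qed (auto intro: sp.intros)

definition fork_lang :: "'a pa \<Rightarrow> nat multiset \<Rightarrow> 'a pomset set" where
  "fork_lang A \<phi> = {pom_par_list Us | Us qs. mset qs = \<phi> \<and> list_all2 (\<lambda>U q. U \<in> lang_pa A q) Us qs}"

inductive pa_step :: "'a pa \<Rightarrow> nat \<Rightarrow> 'a pomset \<Rightarrow> nat \<Rightarrow> bool" for A where
  step_sym: "q' \<in> delta A q a \<Longrightarrow> pa_step A q (pom_sym a) q'"
| step_fork: "q' \<in> gamma A q \<phi> \<Longrightarrow> U \<in> fork_lang A \<phi> \<Longrightarrow> pa_step A q U q'"

inductive pa_steps :: "'a pa \<Rightarrow> nat \<Rightarrow> 'a pomset \<Rightarrow> nat \<Rightarrow> bool" for A where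
  steps_refl: "q \<in> states A \<Longrightarrow> pa_steps A q pom_one q"
| steps_step: "pa_step A q U q'' \<Longrightarrow> pa_steps A q'' V q' \<Longrightarrow> pa_steps A q (pom_seq U V) q'"

lemma pa_steps_trans: "pa_steps A q U q'' \<Longrightarrow> pa_steps A q'' V q' \<Longrightarrow> pa_steps A q (pom_seq U V) q'"
  by (induction rule: pa_steps.induct) (auto simp: pom_seq_assoc intro: steps_step)

lemma pa_step_states: "pa_step A q U q' \<Longrightarrow> pa_wf A \<Longrightarrow> q \<in> states A \<and> q' \<in> states A"
  by (induction rule: pa_step.induct) (unfold pa_wf_def, blast+)

lemma pa_steps_single: "pa_wf A \<Longrightarrow> pa_step A q U q' \<Longrightarrow> pa_steps A q U q'"
  using steps_step[OF _ steps_refl, of A q U q'] pa_step_states by fastforce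

lemma pa_step_run: "pa_step A q U q' \<Longrightarrow> run A q U q'"
proof (induction rule: pa_step.induct)
  case (step_fork q' q \<phi> U)
  then show ?case by (auto simp: fork_lang_def lang_pa_def list_all2_conv_all_nth intro!: run_par)
qed (rule run_sym)

lemma pa_steps_iff_run: "pa_wf A \<Longrightarrow> pa_steps A q U q' \<longleftrightarrow> run A q U q'"
proof
  show "pa_steps A q U q' \<Longrightarrow> run A q U q'"
    by (induction rule: pa_steps.induct) (auto intro: run.intros pa_step_run)
next
  assume wf: "pa_wf A"
  show "run A q U q' \<Longrightarrow> pa_steps A q U q'"
  proof (induction rule: run.induct)
    case (run_par q' q qs Us)
    have "list_all2 (\<lambda>U q. U \<in> lang_pa A q) Us qs"
      using run_par(2,3) by (simp add: list_all2_conv_all_nth lang_pa_def) (meson run_sp)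
    then have "pom_par_list Us \<in> fork_lang A (mset qs)"
      unfolding fork_lang_def by blast
    then show ?case using run_par(1) by (intro pa_steps_single[OF wf] step_fork)
  qed (auto intro: steps_refl pa_steps_trans pa_steps_single[OF wf] step_sym)
qed

lemma lang_pa_steps: "pa_wf A \<Longrightarrow> lang_pa A q = {U. \<exists>f\<in>final A. pa_steps A q U f}"
  unfolding lang_pa_def using pa_steps_iff_run run_sp by blast

lemma final_subset_states: "pa_wf A \<Longrightarrow> final A \<subseteq> states A"
  unfolding pa_wf_def by blast

lemma comp_fun_commute_lpar: "comp_fun_commute (\<lambda>r. lpar (F r))"
  by unfold_locales (auto simp: fun_eq_iff lpar_left_commute)

lemma par_lang_list_fold:
  "{pom_par_list Us | Us. list_all2 (\<lambda>U q. U \<in> F q) Us qs} =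
    fold_mset (\<lambda>r. lpar (F r)) {pom_one} (mset qs)"
proof (induction qs)
  case Nil
  then show ?case by (simp add: pom_par_list_def)
next
  case (Cons r qs)
  have "{pom_par_list Us | Us. list_all2 (\<lambda>U q. U \<in> F q) Us (r # qs)} =
      lpar (F r) {pom_par_list Us | Us. list_all2 (\<lambda>U q. U \<in> F q) Us qs}"
    unfolding lpar_def pom_par_list_def
    by (auto simp: list_all2_Cons2; (blast | metis foldr_Cons comp_apply))
  then show ?case
    using Cons.IH comp_fun_commute.fold_mset_add_mset[OF comp_fun_commute_lpar[of F]] by simp
qed

lemma fork_lang_fold: "fork_lang A \<phi> = fold_mset (\<lambda>r. lpar (lang_pa A r)) {pom_one} \<phi>"
proof -
  have "fork_lang A \<phi> = (\<Union>qs\<in>{qs. mset qs = \<phi>}.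
      {pom_par_list Us | Us. list_all2 (\<lambda>U q. U \<in> lang_pa A q) Us qs})"
    unfolding fork_lang_def by blast
  also have "\<dots> = (\<Union>qs\<in>{qs. mset qs = \<phi>}. fold_mset (\<lambda>r. lpar (lang_pa A r)) {pom_one} \<phi>)"
    unfolding par_lang_list_fold by simp
  also have "\<dots> = fold_mset (\<lambda>r. lpar (lang_pa A r)) {pom_one} \<phi>"
    using ex_mset[of \<phi>] by auto
  finally show ?thesis .
qed

lemma fork_lang_empty [simp]: "fork_lang A {#} = {pom_one}"
  by (simp add: fork_lang_fold)

lemma fork_lang_add_mset [simp]: "fork_lang A (add_mset r \<phi>) = lpar (lang_pa A r) (fork_lang A \<phi>)"
  using comp_fun_commute.fold_mset_add_mset[OF comp_fun_commute_lpar[of "lang_pa A"]]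
  by (simp add: fork_lang_fold)

lemma rational_fork_lang: "(\<And>r. r \<in># \<phi> \<Longrightarrow> rational (lang_pa A r)) \<Longrightarrow> rational (fork_lang A \<phi>)"
  by (induction \<phi>) auto

lemma lang_pa_no_step:
  assumes wf: "pa_wf A" and no_step: "\<And>U p. \<not> pa_step A q U p"
  shows "lang_pa A q = (if q \<in> final A then {pom_one} else {})"
proof -
  have "pa_steps A q U f \<longleftrightarrow> U = pom_one \<and> f = q \<and> q \<in> states A" for U f
    using no_step by (auto elim: pa_steps.cases intro: steps_refl)
  then show ?thesis unfolding lang_pa_steps[OF wf] using final_subset_states[OF wf] by auto
qed

lemma lang_pa_single_successor:
  assumes wf: "pa_wf A" and "q \<notin> final A" and succ: "\<And>U p. pa_step A q U p \<Longrightarrow> p = q'"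
  shows "lang_pa A q = lseq {U. pa_step A q U q'} (lang_pa A q')"
proof (intro set_eqI iffI)
  fix U assume "U \<in> lang_pa A q"
  then obtain f where "f \<in> final A" "pa_steps A q U f" unfolding lang_pa_steps[OF wf] by blast
  with \<open>q \<notin> final A\<close> obtain U1 p U2 where "U = pom_seq U1 U2" "pa_step A q U1 p" "pa_steps A p U2 f"
    by (auto elim: pa_steps.cases)
  with succ \<open>f \<in> final A\<close> show "U \<in> lseq {U. pa_step A q U q'} (lang_pa A q')"
    unfolding lang_pa_steps[OF wf] by (blast intro: lseqI)
next
  fix U assume "U \<in> lseq {U. pa_step A q U q'} (lang_pa A q')"
  then show "U \<in> lang_pa A q"
    unfolding lang_pa_steps[OF wf] by (auto elim!: lseqE intro: steps_step)
qed

lemma lang_pa_loop: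
  assumes wf: "pa_wf A" and "q \<in> final A" and loop: "\<And>U p. pa_step A q U p \<Longrightarrow> p = q"
  shows "lang_pa A q = lstar {U. pa_step A q U q}"
proof (intro set_eqI iffI)
  fix U assume "U \<in> lang_pa A q"
  then obtain f where "pa_steps A q U f" unfolding lang_pa_steps[OF wf] by blast
  then show "U \<in> lstar {U. pa_step A q U q}"
  proof (induction q' \<equiv> q U f rule: pa_steps.induct)
    case (steps_step U p V f)
    then show ?case using loop by (auto intro: lstar_stepI)
  qed (simp add: lstar_oneI)
next
  fix U assume "U \<in> lstar {U. pa_step A q U q}"
  then have "pa_steps A q U q"
  proof (induction rule: lstar_induct)
    case one
    have "q \<in> states A" using final_subset_states[OF wf] \<open>q \<in> final A\<close> by blast
    then show ?case by (rule steps_refl)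
  qed (auto intro: steps_step)
  then show "U \<in> lang_pa A q"
    unfolding lang_pa_steps[OF wf] using \<open>q \<in> final A\<close> by blast
qed

section \<open>From fork-acyclic automata to expressions\<close>

text \<open>These are the languages of
  Kleene's (McNaughton-Yamada) algorithm, which adds one vertex to \<open>S\<close> at a time.\<close>

inductive path_via :: "(nat \<Rightarrow> nat \<Rightarrow> 'a pomset set) \<Rightarrow> nat set \<Rightarrow> nat \<Rightarrow> 'a pomset \<Rightarrow> nat \<Rightarrow> bool"
  for Lab S where
  via_single: "U \<in> Lab i j \<Longrightarrow> path_via Lab S i U j"
| via_cons: "U \<in> Lab i k \<Longrightarrow> k \<in> S \<Longrightarrow> path_via Lab S k V j \<Longrightarrow> path_via Lab S i (pom_seq U V) j"

lemma path_via_trans: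
  "path_via Lab S i U k \<Longrightarrow> k \<in> S \<Longrightarrow> path_via Lab S k V j \<Longrightarrow> path_via Lab S i (pom_seq U V) j"
  by (induction rule: path_via.induct) (auto simp: pom_seq_assoc intro: path_via.intros)

lemma path_via_mono: "path_via Lab S i U j \<Longrightarrow> S \<subseteq> T \<Longrightarrow> path_via Lab T i U j"
  by (induction rule: path_via.induct) (auto intro: path_via.intros)

definition path_lang :: "(nat \<Rightarrow> nat \<Rightarrow> 'a pomset set) \<Rightarrow> nat set \<Rightarrow> nat \<Rightarrow> nat \<Rightarrow> 'a pomset set" where
  "path_lang Lab S i j = {U. path_via Lab S i U j}"

lemma mem_path_lang [simp]: "U \<in> path_lang Lab S i j \<longleftrightarrow> path_via Lab S i U j"
  by (simp add: path_lang_def)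

lemma path_lang_empty: "path_lang Lab {} i j = Lab i j"
  by (auto elim: path_via.cases intro: via_single)

lemma path_via_lstar:
  "V \<in> lstar (path_lang Lab S k k) \<Longrightarrow> path_via Lab (insert k S) i U k \<Longrightarrow>
    path_via Lab (insert k S) i (pom_seq U V) k"
proof (induction V arbitrary: U rule: lstar_induct)
  case (step W V)
  have "path_via Lab (insert k S) i (pom_seq U W) k"
    using step path_via_trans path_via_mono[OF _ subset_insertI] by simp blast
  from step.IH[OF this] show ?case by (simp add: pom_seq_assoc)
qed simp

lemma path_via_insertD:
  assumes "path_via Lab (insert k S) i U j"
  shows "U \<in> path_lang Lab S i j \<union>
    lseq (lseq (path_lang Lab S i k) (lstar (path_lang Lab S k k))) (path_lang Lab S k j)"
  using assms
proof (induction rule: path_via.induct)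
  case (via_single U i j)
  then show ?case by (simp add: path_via.via_single)
next
  case (via_cons U i m V j)
  let ?M = "lstar (path_lang Lab S k k)"
  show ?case
  proof (cases "m = k")
    case True
    then have U: "path_via Lab S i U k" using via_cons(1) by (simp add: path_via.via_single)
    from via_cons.IH show ?thesis
    proof
      assume "V \<in> path_lang Lab S m j"
      then have "pom_seq (pom_seq U pom_one) V \<in>
          lseq (lseq (path_lang Lab S i k) ?M) (path_lang Lab S k j)"
        using U \<open>m = k\<close> by (intro lseqI) (simp_all add: lstar_oneI)
      then show ?thesis by simp
    next
      assume "V \<in> lseq (lseq (path_lang Lab S m k) ?M) (path_lang Lab S k j)"
      then obtain x y z where V: "V = pom_seq (pom_seq x y) z" "path_via Lab S k x k" "y \<in> ?M"
        "path_via Lab S k z j"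
        using \<open>m = k\<close> by (auto elim!: lseqE)
      then have "pom_seq (pom_seq U (pom_seq x y)) z \<in>
          lseq (lseq (path_lang Lab S i k) ?M) (path_lang Lab S k j)"
        using U by (intro lseqI) (simp_all add: lstar_stepI)
      then show ?thesis using V(1) by (simp add: pom_seq_assoc)
    qed
  next
    case False
    then have "m \<in> S" using via_cons(2) by simp
    from via_cons.IH show ?thesis
    proof
      assume "V \<in> path_lang Lab S m j"
      then show ?thesis using via_cons(1) \<open>m \<in> S\<close> by (simp add: path_via.via_cons)
    next
      assume "V \<in> lseq (lseq (path_lang Lab S m k) ?M) (path_lang Lab S k j)"
      then obtain x y z where V: "V = pom_seq (pom_seq x y) z" "path_via Lab S m x k" "y \<in> ?M"
        "path_via Lab S k z j"
        by (auto elim!: lseqE)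
      then have "pom_seq (pom_seq (pom_seq U x) y) z \<in>
          lseq (lseq (path_lang Lab S i k) ?M) (path_lang Lab S k j)"
        using via_cons(1) \<open>m \<in> S\<close> by (intro lseqI) (simp_all add: path_via.via_cons)
      then show ?thesis using V(1) by (simp add: pom_seq_assoc)
    qed
  qed
qed

lemma path_lang_insert:
  "path_lang Lab (insert k S) i j = path_lang Lab S i j \<union>
    lseq (lseq (path_lang Lab S i k) (lstar (path_lang Lab S k k))) (path_lang Lab S k j)"
proof (intro set_eqI iffI)
  fix U assume "U \<in> path_lang Lab S i j \<union>
    lseq (lseq (path_lang Lab S i k) (lstar (path_lang Lab S k k))) (path_lang Lab S k j)"
  then show "U \<in> path_lang Lab (insert k S) i j"
  proof
    assume "U \<in> path_lang Lab S i j"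
    then show ?thesis by (simp add: path_via_mono subset_insertI)
  next
    assume "U \<in> lseq (lseq (path_lang Lab S i k) (lstar (path_lang Lab S k k))) (path_lang Lab S k j)"
    then obtain x y z where U: "U = pom_seq (pom_seq x y) z" "path_via Lab S i x k"
      "y \<in> lstar (path_lang Lab S k k)" "path_via Lab S k z j"
      by (auto elim!: lseqE)
    have "path_via Lab (insert k S) i (pom_seq x y) k"
      using U(3) path_via_mono[OF U(2)] by (blast intro: path_via_lstar)
    moreover have "path_via Lab (insert k S) k z j"
      using U(4) by (rule path_via_mono) blast
    ultimately show ?thesis
      unfolding U(1) by (simp add: path_via_trans)
  qed
qed (rule path_via_insertD, simp)

lemma rational_path_lang:
  assumes "finite S" "\<And>i j. rational (Lab i j)"
  shows "rational (path_lang Lab S i j)"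
  using assms(1)
proof (induction S arbitrary: i j rule: finite_induct)
  case empty
  then show ?case using assms(2) by (simp add: path_lang_empty)
next
  case (insert k S)
  then show ?case
    unfolding path_lang_insert by (intro rational_Un rational_lseq rational_lstar)
qed

definition below :: "'a pa \<Rightarrow> nat \<Rightarrow> nat set" where
  "below A q = {p. (p, q) \<in> supp A}"

lemma below_refl: "q \<in> below A q"
  unfolding below_def supp_def by simp

lemma below_step: "p \<in> below A q \<Longrightarrow> (p', p) \<in> supp_step A \<Longrightarrow> p' \<in> below A q"
  unfolding below_def supp_def by (simp add: converse_rtrancl_into_rtrancl)

lemma below_mono: "p \<in> below A q \<Longrightarrow> below A p \<subseteq> below A q"
  unfolding below_def supp_def by (auto intro: rtrancl_trans)

lemma below_subset_states: "pa_wf A \<Longrightarrow> below A q \<subseteq> insert q (states A)"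
proof
  fix p assume "pa_wf A" "p \<in> below A q"
  then have "(p, q) \<in> (supp_step A)\<^sup>*" "\<And>p q. (p, q) \<in> supp_step A \<Longrightarrow> p \<in> states A"
    unfolding below_def supp_def supp_step_def pa_wf_def by blast+
  then show "p \<in> insert q (states A)"
    by (cases rule: converse_rtranclE) auto
qed

lemma finite_below: "pa_wf A \<Longrightarrow> finite (states A) \<Longrightarrow> finite (below A q)"
  using below_subset_states finite_subset by blast

lemma pa_step_supp_step: "pa_step A q U q' \<Longrightarrow> (q', q) \<in> supp_step A"
  by (induction rule: pa_step.induct) (auto simp: supp_step_def)

lemma card_below_fork_child:
  assumes "pa_wf A" "finite (states A)" "fork_acyclic A"
    and "r \<in># \<phi>" "gamma A p \<phi> \<noteq> {}" "p \<in> below A q"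
  shows "card (below A r) < card (below A q)"
proof -
  have "(r, p) \<in> supp_step A" using assms(4,5) unfolding supp_step_def by blast
  then have "r \<in> below A p" by (rule below_step[OF below_refl])
  then have "below A r \<subseteq> below A q" using below_mono assms(6) by blast
  moreover have "p \<notin> below A r"
    using assms(3-5) unfolding fork_acyclic_def below_def by blast
  ultimately have "below A r \<subset> below A q" using assms(6) by blast
  then show ?thesis using finite_below[OF assms(1,2)] by (rule psubset_card_mono[rotated])
qed

text \<open>The finiteness of the alphabet is needed here: the letters of the transitions from
  \<open>p\<close> to \<open>p'\<close> form a finite union.\<close>

lemma rational_step_lang:
  fixes A :: "('a::finite) pa"
  assumes "pa_wf A" and children: "\<And>r \<phi>. gamma A p \<phi> \<noteq> {} \<Longrightarrow> r \<in># \<phi> \<Longrightarrow> rational (lang_pa A r)"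
  shows "rational {U. pa_step A p U p'}"
proof -
  have eq: "{U. pa_step A p U p'} = (\<Union>a\<in>{a. p' \<in> delta A p a}. {pom_sym a}) \<union>
      (\<Union>\<phi>\<in>{\<phi>. gamma A p \<phi> \<noteq> {} \<and> p' \<in> gamma A p \<phi>}. fork_lang A \<phi>)"
    by (auto simp: pa_step.simps)
  have "finite {\<phi>. gamma A p \<phi> \<noteq> {} \<and> p' \<in> gamma A p \<phi>}"
    using assms(1) unfolding pa_wf_def by (auto intro: finite_subset[rotated])
  moreover have "rational (fork_lang A \<phi>)" if "gamma A p \<phi> \<noteq> {}" for \<phi>
    using children[OF that] by (rule rational_fork_lang)
  ultimately show ?thesis
    unfolding eq by (intro rational_Un rational_UN rational_sym finite) blast+
qed

lemma lang_pa_paths: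
  assumes wf: "pa_wf A" and "q \<in> Q"
    and closed: "\<And>i U j. i \<in> Q \<Longrightarrow> pa_step A i U j \<Longrightarrow> j \<in> Q"
  shows "lang_pa A q = (if q \<in> final A then {pom_one} else {}) \<union>
    (\<Union>f\<in>final A \<inter> Q. path_lang (\<lambda>i j. {U. i \<in> Q \<and> pa_step A i U j}) Q q f)"
proof -
  let ?Lab = "\<lambda>i j. {U. i \<in> Q \<and> pa_step A i U j}"
  have to_path: "(j = i \<and> U = pom_one) \<or> path_via ?Lab Q i U j"
    if "pa_steps A i U j" "i \<in> Q" for i U j
    using that
  proof (induction rule: pa_steps.induct)
    case (steps_step i U k V j)
    then have "k \<in> Q" using closed by blast
    with steps_step show ?case by (auto intro: path_via.intros)
  qed simp
  have from_path: "pa_steps A i U j \<and> j \<in> Q" if "path_via ?Lab Q i U j" for i U j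
    using that
    by (induction rule: path_via.induct) (auto intro: pa_steps_single[OF wf] pa_steps_trans closed)
  show ?thesis
  proof (intro set_eqI iffI)
    fix U assume "U \<in> lang_pa A q"
    then obtain f where "f \<in> final A" "pa_steps A q U f"
      unfolding lang_pa_steps[OF wf] by blast
    then show "U \<in> (if q \<in> final A then {pom_one} else {}) \<union>
        (\<Union>f\<in>final A \<inter> Q. path_lang ?Lab Q q f)"
      using to_path[of q U f] from_path[of q U f] \<open>q \<in> Q\<close> by auto
  next
    fix U assume "U \<in> (if q \<in> final A then {pom_one} else {}) \<union>
        (\<Union>f\<in>final A \<inter> Q. path_lang ?Lab Q q f)"
    then obtain f where "f \<in> final A" "pa_steps A q U f"
      using from_path steps_refl final_subset_states[OF wf] by (fastforce split: if_splits)
    then show "U \<in> lang_pa A q"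
      unfolding lang_pa_steps[OF wf] by blast
  qed
qed

theorem rational_lang_pa:
  fixes A :: "('a::finite) pa"
  assumes wf: "pa_wf A" and fin: "finite (states A)" and fac: "fork_acyclic A"
  shows "rational (lang_pa A q)"
proof (induction q rule: measure_induct_rule[of "\<lambda>q. card (below A q)"])
  case (less q)
  let ?Q = "below A q"
  have "rational {U. i \<in> ?Q \<and> pa_step A i U j}" for i j
  proof (cases "i \<in> ?Q")
    case True
    then have "rational {U. pa_step A i U j}"
      using less card_below_fork_child[OF wf fin fac] by (intro rational_step_lang[OF wf]) blast
    with True show ?thesis by simp
  qed simp
  then have "rational (path_lang (\<lambda>i j. {U. i \<in> ?Q \<and> pa_step A i U j}) ?Q q f)" for f
    by (intro rational_path_lang finite_below[OF wf fin])
  moreover have "finite (final A \<inter> ?Q)"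
    using finite_below[OF wf fin] by blast
  moreover have closed: "j \<in> ?Q" if "i \<in> ?Q" "pa_step A i U j" for i U j
    using that below_step pa_step_supp_step by blast
  ultimately show "rational (lang_pa A q)"
    by (simp only: lang_pa_paths[OF wf below_refl closed]) (intro rational_Un rational_UN; simp)
qed

section \<open>From expressions to automata\<close>

lemma fork_acyclicI:
  fixes \<mu> :: "nat \<Rightarrow> nat"
  assumes mono: "\<And>p q. (p, q) \<in> supp_step A \<Longrightarrow> \<mu> p \<le> \<mu> q"
    and fork: "\<And>q \<phi> r. gamma A q \<phi> \<noteq> {} \<Longrightarrow> r \<in># \<phi> \<Longrightarrow> \<mu> r < \<mu> q"
  shows "fork_acyclic A"
proof -
  have "\<mu> p \<le> \<mu> q" if "(p, q) \<in> supp A" for p q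
    using that unfolding supp_def
    by (induction rule: rtrancl_induct) (auto dest: mono)
  then show ?thesis
    unfolding fork_acyclic_def using fork by (meson leD)
qed

instance srexp :: (countable) countable
  by countable_datatype

datatype 'a node = Done | Start "'a srexp" | Mid "'a srexp" "'a srexp"

instance node :: (countable) countable
  by countable_datatype

fun subexprs :: "'a srexp \<Rightarrow> 'a srexp set" where
  "subexprs (Plus g h) = insert (Plus g h) (subexprs g \<union> subexprs h)"
| "subexprs (Seq g h) = insert (Seq g h) (subexprs g \<union> subexprs h)"
| "subexprs (Par g h) = insert (Par g h) (subexprs g \<union> subexprs h)"
| "subexprs (Star g) = insert (Star g) (subexprs g)"
| "subexprs e = {e}"

lemma subexprs_refl: "e \<in> subexprs e"
  by (cases e) auto

lemma finite_subexprs: "finite (subexprs e)"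
  by (induction e) auto

lemma subexprs_trans: "g \<in> subexprs e \<Longrightarrow> subexprs g \<subseteq> subexprs e"
  by (induction e) auto

lemma subexprs_childD:
  "Plus g h \<in> subexprs e \<Longrightarrow> g \<in> subexprs e \<and> h \<in> subexprs e"
  "Seq g h \<in> subexprs e \<Longrightarrow> g \<in> subexprs e \<and> h \<in> subexprs e"
  "Par g h \<in> subexprs e \<Longrightarrow> g \<in> subexprs e \<and> h \<in> subexprs e"
  "Star g \<in> subexprs e \<Longrightarrow> g \<in> subexprs e"
  using subexprs_trans subexprs_refl by fastforce+

definition nodes :: "'a srexp \<Rightarrow> 'a node set" where
  "nodes e = insert Done (Start ` subexprs e \<union> {Mid g h | g h. Seq g h \<in> subexprs e})"

lemma finite_nodes: "finite (nodes e)"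
proof -
  have "{Mid g h | g h. Seq g h \<in> subexprs e} \<subseteq> (\<lambda>f. case f of Seq g h \<Rightarrow> Mid g h) ` subexprs e"
    by force
  then show ?thesis
    unfolding nodes_def using finite_subexprs finite_subset by blast
qed

text \<open>\<open>Mid g h\<close> is the state of \<open>Seq g h\<close> after \<open>g\<close> has been read; \<open>node_forks s\<close> lists the
  forks of \<open>s\<close>, each paired with its target.\<close>

fun node_final :: "'a node \<Rightarrow> bool" where
  "node_final Done = True"
| "node_final (Start One) = True"
| "node_final (Start (Star g)) = True"
| "node_final _ = False"

fun node_delta :: "('a::countable) node \<Rightarrow> 'a \<Rightarrow> nat set" where
  "node_delta (Start (Sym b)) a = (if a = b then {to_nat (Done :: 'a node)} else {})"
| "node_delta _ _ = {}"

fun node_forks :: "('a::countable) node \<Rightarrow> (nat multiset \<times> nat) set" where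
  "node_forks (Start (Plus g h)) =
     {({#to_nat (Start g)#}, to_nat (Done :: 'a node)), ({#to_nat (Start h)#}, to_nat (Done :: 'a node))}"
| "node_forks (Start (Seq g h)) = {({#to_nat (Start g)#}, to_nat (Mid g h))}"
| "node_forks (Mid g h) = {({#to_nat (Start h)#}, to_nat (Done :: 'a node))}"
| "node_forks (Start (Par g h)) =
     {({#to_nat (Start g), to_nat (Start h)#}, to_nat (Done :: 'a node))}"
| "node_forks (Start (Star g)) = {({#to_nat (Start g)#}, to_nat (Start (Star g)))}"
| "node_forks _ = {}"

fun node_rank :: "'a node \<Rightarrow> nat" where
  "node_rank Done = 0"
| "node_rank (Start g) = 2 * size g + 2"
| "node_rank (Mid g h) = 2 * size h + 3"

lemma node_rank_delta:
  fixes s :: "('a::countable) node"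
  shows "p \<in> node_delta s a \<Longrightarrow> node_rank (from_nat p :: 'a node) \<le> node_rank s"
  by (cases "(s, a)" rule: node_delta.cases) (auto split: if_splits)

lemma node_rank_forks:
  fixes s :: "('a::countable) node"
  shows "(\<phi>, t) \<in> node_forks s \<Longrightarrow> node_rank (from_nat t :: 'a node) \<le> node_rank s \<and>
    (\<forall>r\<in>#\<phi>. node_rank (from_nat r :: 'a node) < node_rank s)"
  by (cases s rule: node_forks.cases) auto

definition aut :: "('a::countable) srexp \<Rightarrow> 'a pa" where
  "aut e = \<lparr>states = to_nat ` nodes e, final = to_nat ` {s \<in> nodes e. node_final s},
     delta = (\<lambda>q a. if q \<in> to_nat ` nodes e then node_delta (from_nat q :: 'a node) a else {}),
     gamma = (\<lambda>q \<phi>. if q \<in> to_nat ` nodes e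
       then {t. (\<phi>, t) \<in> node_forks (from_nat q :: 'a node)} else {})\<rparr>"

context
  fixes e :: "('a::countable) srexp"
begin

lemma aut_simps:
  "states (aut e) = to_nat ` nodes e"
  "final (aut e) = to_nat ` {s \<in> nodes e. node_final s}"
  "delta (aut e) q a = (if q \<in> to_nat ` nodes e then node_delta (from_nat q :: 'a node) a else {})"
  "gamma (aut e) q \<phi> =
     (if q \<in> to_nat ` nodes e then {t. (\<phi>, t) \<in> node_forks (from_nat q :: 'a node)} else {})"
  by (simp_all add: aut_def)

lemma node_delta_nodes: "s \<in> nodes e \<Longrightarrow> node_delta s a \<subseteq> to_nat ` nodes e"
  by (cases "(s, a)" rule: node_delta.cases) (auto simp: nodes_def)

lemma node_forks_nodes:
  "s \<in> nodes e \<Longrightarrow> (\<phi>, t) \<in> node_forks s \<Longrightarrow> t \<in> to_nat ` nodes e \<and> set_mset \<phi> \<subseteq> to_nat ` nodes e"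
  by (cases s rule: node_forks.cases) (auto simp: nodes_def dest: subexprs_childD)

lemma finite_node_forks: "finite (node_forks s)"
  by (cases s rule: node_forks.cases) auto

lemma pa_wf_aut: "pa_wf (aut e)"
  unfolding pa_wf_def
proof (intro conjI allI impI)
  show "final (aut e) \<subseteq> states (aut e)"
    by (auto simp: aut_simps)
  show "delta (aut e) q a \<subseteq> states (aut e)" for q a
    using node_delta_nodes by (auto simp: aut_simps; blast)
  show "q \<notin> states (aut e) \<Longrightarrow> delta (aut e) q a = {}" for q a
    by (simp add: aut_simps)
  show "gamma (aut e) q \<phi> \<subseteq> states (aut e)" for q \<phi>
    using node_forks_nodes by (auto simp: aut_simps; blast)
  show "q \<in> states (aut e)" if "gamma (aut e) q \<phi> \<noteq> {}" for q \<phi>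
    using that by (simp add: aut_simps split: if_splits)
  show "set_mset \<phi> \<subseteq> states (aut e)" if fork: "gamma (aut e) q \<phi> \<noteq> {}" for q \<phi>
  proof -
    obtain s t where "s \<in> nodes e" "(\<phi>, t) \<in> node_forks s"
      using fork by (fastforce simp: aut_simps split: if_splits)
    then show ?thesis using node_forks_nodes by (simp add: aut_simps)
  qed
  have "{\<phi>. gamma (aut e) q \<phi> \<noteq> {}} \<subseteq> Domain (node_forks (from_nat q :: 'a node))" for q
    by (auto simp: aut_simps split: if_splits)
  then show "finite {\<phi>. gamma (aut e) q \<phi> \<noteq> {}}" for q
    using finite_node_forks by (meson finite_Domain finite_subset)
qed

lemma finite_states_aut: "finite (states (aut e))"
  by (simp add: aut_simps finite_nodes)

lemma fork_acyclic_aut: "fork_acyclic (aut e)"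
proof (rule fork_acyclicI[where \<mu>="\<lambda>q. node_rank (from_nat q :: 'a node)"])
  show "node_rank (from_nat p :: 'a node) \<le> node_rank (from_nat q :: 'a node)"
    if "(p, q) \<in> supp_step (aut e)" for p q
    using that node_rank_delta node_rank_forks
    by (fastforce simp: supp_step_def aut_simps split: if_splits)
  show "node_rank (from_nat r :: 'a node) < node_rank (from_nat q :: 'a node)"
    if "gamma (aut e) q \<phi> \<noteq> {}" "r \<in># \<phi>" for q \<phi> r
    using that node_rank_forks by (fastforce simp: aut_simps split: if_splits)
qed

lemma pa_step_aut:
  assumes "s \<in> nodes e"
  shows "pa_step (aut e) (to_nat s) U q \<longleftrightarrow>
    (\<exists>a. q \<in> node_delta s a \<and> U = pom_sym a) \<or> (\<exists>\<phi>. (\<phi>, q) \<in> node_forks s \<and> U \<in> fork_lang (aut e) \<phi>)"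
  using assms by (auto simp: pa_step.simps aut_simps)

lemma final_aut: "s \<in> nodes e \<Longrightarrow> to_nat s \<in> final (aut e) \<longleftrightarrow> node_final s"
  by (auto simp: aut_simps)

lemma start_nodes: "g \<in> subexprs e \<Longrightarrow> Start g \<in> nodes e"
  by (simp add: nodes_def)

lemma lang_aut_Done: "lang_pa (aut e) (to_nat (Done :: 'a node)) = {pom_one}"
proof -
  have "Done \<in> nodes e" by (simp add: nodes_def)
  then show ?thesis
    by (subst lang_pa_no_step[OF pa_wf_aut]) (auto simp: pa_step_aut final_aut)
qed

lemma lang_aut_via_Done:
  assumes "s \<in> nodes e" "\<not> node_final s"
    and "\<And>a. node_delta s a \<subseteq> {to_nat (Done :: 'a node)}"
    and "snd ` node_forks s \<subseteq> {to_nat (Done :: 'a node)}"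
  shows "lang_pa (aut e) (to_nat s) = {U. pa_step (aut e) (to_nat s) U (to_nat (Done :: 'a node))}"
proof -
  have "lang_pa (aut e) (to_nat s) =
      lseq {U. pa_step (aut e) (to_nat s) U (to_nat (Done :: 'a node))} {pom_one}"
    using assms lang_aut_Done
    by (subst lang_pa_single_successor[OF pa_wf_aut]) (auto simp: pa_step_aut final_aut)
  then show ?thesis by (simp add: lseq_def)
qed

lemma lang_aut_Start: "g \<in> subexprs e \<Longrightarrow> lang_pa (aut e) (to_nat (Start g)) = sem g"
proof (induction g)
  case Zero
  then show ?case
    by (subst lang_pa_no_step[OF pa_wf_aut]) (auto simp: pa_step_aut final_aut start_nodes)
next
  case One
  then show ?case
    by (subst lang_pa_no_step[OF pa_wf_aut]) (auto simp: pa_step_aut final_aut start_nodes)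
next
  case (Sym b)
  then show ?case
    by (subst lang_aut_via_Done) (auto simp: pa_step_aut start_nodes)
next
  case (Plus g h)
  then have "lang_pa (aut e) (to_nat (Start g)) = sem g" "lang_pa (aut e) (to_nat (Start h)) = sem h"
    by (auto dest: subexprs_childD)
  then show ?case
    using Plus.prems by (subst lang_aut_via_Done)
      (auto simp: pa_step_aut start_nodes conj_disj_distribR ex_disj_distrib)
next
  case (Par g h)
  then have "lang_pa (aut e) (to_nat (Start g)) = sem g" "lang_pa (aut e) (to_nat (Start h)) = sem h"
    by (auto dest: subexprs_childD)
  then show ?case
    using Par.prems by (subst lang_aut_via_Done) (auto simp: pa_step_aut start_nodes)
next
  case (Seq g h)
  then have "lang_pa (aut e) (to_nat (Start g)) = sem g" "lang_pa (aut e) (to_nat (Start h)) = sem h"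
    by (auto dest: subexprs_childD)
  moreover have mid: "Mid g h \<in> nodes e" using Seq.prems by (auto simp: nodes_def)
  ultimately have "lang_pa (aut e) (to_nat (Mid g h)) = sem h"
    by (subst lang_aut_via_Done) (auto simp: pa_step_aut)
  with \<open>lang_pa (aut e) (to_nat (Start g)) = sem g\<close> show ?case
    using Seq.prems by (subst lang_pa_single_successor[OF pa_wf_aut, where q'="to_nat (Mid g h)"])
      (auto simp: pa_step_aut final_aut start_nodes)
next
  case (Star g)
  then have "lang_pa (aut e) (to_nat (Start g)) = sem g"
    by (auto dest: subexprs_childD)
  then show ?case
    using Star.prems by (subst lang_pa_loop[OF pa_wf_aut]) (auto simp: pa_step_aut final_aut start_nodes)
qed

end

theorem theorem8p5:
  fixes L :: "('a::finite) pomset set"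
  shows "(\<exists>e. L = sem e) \<longleftrightarrow>
    (\<exists>(A :: 'a pa) q. pa_wf A \<and> finite (states A) \<and> fork_acyclic A \<and>
        q \<in> states A \<and> L = lang_pa A q)"
proof
  assume "\<exists>e. L = sem e"
  then obtain e where "L = lang_pa (aut e) (to_nat (Start e))"
    using lang_aut_Start[OF subexprs_refl] by metis
  moreover have "to_nat (Start e) \<in> states (aut e)"
    unfolding aut_simps using start_nodes[OF subexprs_refl] by (rule imageI)
  ultimately show "\<exists>(A :: 'a pa) q. pa_wf A \<and> finite (states A) \<and> fork_acyclic A \<and>
      q \<in> states A \<and> L = lang_pa A q"
    using pa_wf_aut finite_states_aut fork_acyclic_aut by blast
next
  assume "\<exists>(A :: 'a pa) q. pa_wf A \<and> finite (states A) \<and> fork_acyclic A \<and>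
      q \<in> states A \<and> L = lang_pa A q"
  then show "\<exists>e. L = sem e"
    using rational_lang_pa unfolding rational_def by blast
qed

end
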